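(* Let $c>0$, let $d\ge 1$, and let $\eta=\mathrm{diag}(-1,+1,\dots,+1)$ be the Minkowski metric on $\mathbb{R}^{d+1}$ (indices lowered with $\eta$). Let $t\mapsto \vec{x}(t)\in\mathbb{R}^d$ be a smooth trajectory with $|\vec v|<c$, where $\vec v=\mathrm{d}\vec x/\mathrm{d}t$, $\vec a=\mathrm{d}\vec v/\mathrm{d}t$, and $\gamma=(1-\vec v^{\,2}/c^2)^{-1/2}$. Let $\tau$ be proper time, $\mathrm{d}t/\mathrm{d}\tau=\gamma$, let $x^\mu(\tau)=(ct,\vec x)$ be the worldline, $v^\mu=\mathrm{d}x^\mu/\mathrm{d}\tau=(\gamma c,\gamma\vec v)$ and $a^\mu=\mathrm{d}v^\mu/\mathrm{d}\tau$. Define $(d+1)$-vectors recursively by $P_{(1)}^\mu=a^\mu$ and $$P_{(n)}^\mu=\Big(\delta^\mu_{\ \nu}+\frac{v^\mu v_\nu}{c^2}\Big)\frac{\mathrm{d}}{\mathrm{d}\tau}P_{(n-1)}^\nu,\qquad n\ge 2.$$ Let $\hat M$ be the $d\times d$ matrix $\hat M_{ij}=\delta_{ij}+\frac{\gamma^2}{c^2}v_iv_j$. Define $d$-vectors $\vec Q_{(n)}$ by $\vec Q_{(1)}=\vec a$ and $$\vec Q_{(n)}=\frac{1}{\gamma^n}\frac{\mathrm{d}}{\mathrm{d}t}\big(\gamma^n\vec Q_{(n-1)}\big)+\frac{\gamma^2}{c^2}\big(\vec v\cdot\vec Q_{(n-1)}\big)\vec a,\qquad n\ge 2.$$ Then for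 every $n\ge 1$, $$P_{(n)}^\mu=\Big(\frac{\gamma^{n+3}}{c}\,\vec v\cdot\vec Q_{(n)},\ \gamma^{n+1}\hat M\vec Q_{(n)}\Big),$$ where the first entry is the time component and the second the spatial components.
   Context: Dots denote Euclidean inner products in $\mathbb{R}^d$. $\hat M$ is invertible with inverse $\hat M^{-1}_{ij}=\delta_{ij}-v_iv_j/c^2$. *)

theory Defs
  imports "HOL-Analysis.Analysis"
begin

text \<open>Spatial vectors live in real^'d (d = CARD('d) \<ge> 1); spacetime (d+1)-vectors are
pairs (time component, spatial components) :: (real \<times> (real^'d)).\<close>

definition smooth_traj :: "(real \<Rightarrow> 'a::real_normed_vector) \<Rightarrow> bool" where
  "smooth_traj f \<longleftrightarrow> (\<exists>D. D 0 = f \<and> (\<forall>k t. (D k has_vector_derivative D (Suc k) t) (at t)))"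

definition gam :: "real \<Rightarrow> real^'d \<Rightarrow> real" where
  "gam c v = 1 / sqrt (1 - (v \<bullet> v) / c\<^sup>2)"

definition vel :: "(real \<Rightarrow> real^'d) \<Rightarrow> real \<Rightarrow> real^'d" where
  "vel x t = vector_derivative x (at t)"

definition acc :: "(real \<Rightarrow> real^'d) \<Rightarrow> real \<Rightarrow> real^'d" where
  "acc x t = vector_derivative (vel x) (at t)"

definition mink :: "(real \<times> (real^'d)) \<Rightarrow> (real \<times> (real^'d)) \<Rightarrow> real" where
  "mink u w = - fst u * fst w + snd u \<bullet> snd w"

definition proj :: "real \<Rightarrow> (real \<times> (real^'d)) \<Rightarrow> (real \<times> (real^'d)) \<Rightarrow> (real \<times> (real^'d))" where
  "proj c u w = w + (mink u w / c\<^sup>2) *\<^sub>R u"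

definition worldline :: "real \<Rightarrow> (real \<Rightarrow> real) \<Rightarrow> (real \<Rightarrow> real^'d) \<Rightarrow> real \<Rightarrow> (real \<times> (real^'d))" where
  "worldline c tt x s = (c * tt s, x (tt s))"

definition fvel :: "real \<Rightarrow> (real \<Rightarrow> real) \<Rightarrow> (real \<Rightarrow> real^'d) \<Rightarrow> real \<Rightarrow> (real \<times> (real^'d))" where
  "fvel c tt x s = vector_derivative (worldline c tt x) (at s)"

definition facc :: "real \<Rightarrow> (real \<Rightarrow> real) \<Rightarrow> (real \<Rightarrow> real^'d) \<Rightarrow> real \<Rightarrow> (real \<times> (real^'d))" where
  "facc c tt x s = vector_derivative (fvel c tt x) (at s)"

text \<open>P_(n) as functions of proper time; the index 0 is an unused dummy.\<close>
fun P :: "real \<Rightarrow> (real \<Rightarrow> real) \<Rightarrow> (real \<Rightarrow> real^'d) \<Rightarrow> nat \<Rightarrow> real \<Rightarrow> (real \<times> (real^'d))" where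
  "P c tt x 0 s = 0"
| "P c tt x (Suc 0) s = facc c tt x s"
| "P c tt x (Suc (Suc k)) s =
     proj c (fvel c tt x s) (vector_derivative (P c tt x (Suc k)) (at s))"

text \<open>Q_(n) as functions of coordinate time t; the index 0 is an unused dummy.\<close>
fun Q :: "real \<Rightarrow> (real \<Rightarrow> real^'d) \<Rightarrow> nat \<Rightarrow> real \<Rightarrow> real^'d" where
  "Q c x 0 t = 0"
| "Q c x (Suc 0) t = acc x t"
| "Q c x (Suc (Suc k)) t =
     (1 / gam c (vel x t) ^ Suc (Suc k)) *\<^sub>R
        vector_derivative (\<lambda>s. gam c (vel x s) ^ Suc (Suc k) *\<^sub>R Q c x (Suc k) s) (at t)
     + ((gam c (vel x t))\<^sup>2 / c\<^sup>2 * (vel x t \<bullet> Q c x (Suc k) t)) *\<^sub>R acc x t"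

definition Mhat :: "real \<Rightarrow> real^'d \<Rightarrow> real^'d^'d" where
  "Mhat c v = (\<chi> i j. (if i = j then 1 else 0) + (gam c v)\<^sup>2 / c\<^sup>2 * v $ i * v $ j)"

end

theory Submission
  imports Defs
begin

(* Write u = (c gamma, gamma v) for the four-velocity as a function of coordinate time t and
   Pi_u w = w + (u.w / c^2) u  (Minkowski product u.w) for the projection orthogonal to u.
   Since u.u = -c^2, Pi_u annihilates u, and du/dt = gamma Pi_u (0, a) is orthogonal to u.
   The theorem amounts to  P_(n) = Pi_u (0, gamma^(n+1) Q_(n)),  proved by induction on n:
   differentiating Pi_u (0, Y) and projecting again, the component along u drops out and the
   one along du/dt contributes gamma (v.Y) / c^2 du/dt, so that
     Pi_u (d/dt Pi_u (0, Y)) = Pi_u (0, Y' + gamma^2 (v.Y) / c^2 a);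
   together with d/dtau = gamma d/dt this is the recursion defining Q_(n+1).
   All Q_(n) are differentiable because they are built from the smooth functions v, a and
   gamma by sums, products and differentiation. *)

fun times_differentiable :: "nat \<Rightarrow> (real \<Rightarrow> 'a::real_normed_vector) \<Rightarrow> bool" where
  "times_differentiable 0 f \<longleftrightarrow> True"
| "times_differentiable (Suc k) f \<longleftrightarrow>
     (\<forall>t. f differentiable (at t)) \<and> times_differentiable k (\<lambda>t. vector_derivative f (at t))"

lemma times_differentiable_SucI:
  assumes "\<And>t. (f has_vector_derivative f' t) (at t)" and "times_differentiable k f'"
  shows "times_differentiable (Suc k) f"
proof -
  have "(\<lambda>t. vector_derivative f (at t)) = f'"
    using assms(1) by (simp add: fun_eq_iff vector_derivative_at)
  with assms show ?thesis by (auto intro: differentiableI_vector)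
qed

lemma times_differentiable_SucD:
  "times_differentiable (Suc k) f \<Longrightarrow> (f has_vector_derivative vector_derivative f (at t)) (at t)"
  by (simp add: vector_derivative_works)

lemma times_differentiable_Suc_imp:
  "times_differentiable (Suc k) f \<Longrightarrow> times_differentiable k f"
  by (induction k arbitrary: f) auto

lemma times_differentiable_const: "times_differentiable k (\<lambda>t. a)"
proof (induction k arbitrary: a)
  case (Suc k)
  then show ?case by (intro times_differentiable_SucI[where f'="\<lambda>t. 0"]) auto
qed simp

lemma times_differentiable_add:
  "times_differentiable k f \<Longrightarrow> times_differentiable k g \<Longrightarrow> times_differentiable k (\<lambda>t. f t + g t)"
proof (induction k arbitrary: f g)
  case (Suc k)
  then show ?case
    by (intro times_differentiable_SucI[where
          f'="\<lambda>t. vector_derivative f (at t) + vector_derivative g (at t)"])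
       (auto intro!: has_vector_derivative_add times_differentiable_SucD)
qed simp

lemma (in bounded_bilinear) times_differentiable:
  "times_differentiable k f \<Longrightarrow> times_differentiable k g \<Longrightarrow>
   times_differentiable k (\<lambda>t. prod (f t) (g t))"
proof (induction k arbitrary: f g)
  case (Suc k)
  let ?f' = "\<lambda>t. vector_derivative f (at t)" and ?g' = "\<lambda>t. vector_derivative g (at t)"
  have "times_differentiable k (\<lambda>t. prod (f t) (?g' t) + prod (?f' t) (g t))"
    using Suc by (intro times_differentiable_add Suc.IH) (auto intro: times_differentiable_Suc_imp)
  then show ?case
    using Suc.prems
    by (intro times_differentiable_SucI[OF has_vector_derivative])
       (auto intro: times_differentiable_SucD)
qed simp

lemmas times_differentiable_scaleR = bounded_bilinear.times_differentiable[OF bounded_bilinear_scaleR]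
lemmas times_differentiable_mult = bounded_bilinear.times_differentiable[OF bounded_bilinear_mult]
lemmas times_differentiable_inner = bounded_bilinear.times_differentiable[OF bounded_bilinear_inner]

lemma times_differentiable_power:
  assumes "times_differentiable k f"
  shows "times_differentiable k (\<lambda>t. f t ^ m :: 'a::real_normed_algebra_1)"
proof (induction m)
  case 0
  then show ?case by (simp add: times_differentiable_const)
next
  case (Suc m)
  then show ?case by (simp add: times_differentiable_mult[OF assms])
qed

lemma times_differentiable_divide_const:
  "times_differentiable k f \<Longrightarrow> times_differentiable k (\<lambda>t. f t / a :: real)"
  using times_differentiable_mult[OF _ times_differentiable_const[of k "1 / a"]] by simp

lemma smooth_traj_has_vector_derivative:
  "smooth_traj f \<Longrightarrow> (f has_vector_derivative vector_derivative f (at t)) (at t)"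
  unfolding smooth_traj_def by (auto intro: vector_derivative_works[THEN iffD1] differentiableI_vector)

lemma smooth_traj_vector_derivative:
  assumes "smooth_traj f" shows "smooth_traj (\<lambda>t. vector_derivative f (at t))"
proof -
  obtain D where f: "D 0 = f" and D: "\<And>k t. (D k has_vector_derivative D (Suc k) t) (at t)"
    using assms unfolding smooth_traj_def by blast
  have "(\<lambda>t. vector_derivative f (at t)) = D 1"
    using D[of 0] unfolding f by (simp add: fun_eq_iff vector_derivative_at)
  with D show ?thesis
    unfolding smooth_traj_def by (intro exI[of _ "\<lambda>k. D (Suc k)"]) auto
qed

lemma smooth_traj_times_differentiable: "smooth_traj f \<Longrightarrow> times_differentiable k f"
proof (induction k arbitrary: f)
  case (Suc k)
  then show ?case
    by (intro times_differentiable_SucI[OF smooth_traj_has_vector_derivative]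
        Suc.IH smooth_traj_vector_derivative)
qed simp

lemma smooth_traj_vel: "smooth_traj x \<Longrightarrow> smooth_traj (vel x)"
  unfolding vel_def[abs_def] by (rule smooth_traj_vector_derivative)

lemma smooth_traj_acc: "smooth_traj x \<Longrightarrow> smooth_traj (acc x)"
  unfolding acc_def[abs_def] by (intro smooth_traj_vector_derivative smooth_traj_vel)

lemma has_vector_derivative_vel: "smooth_traj x \<Longrightarrow> (x has_vector_derivative vel x t) (at t)"
  unfolding vel_def by (rule smooth_traj_has_vector_derivative)

lemma has_vector_derivative_acc: "smooth_traj x \<Longrightarrow> (vel x has_vector_derivative acc x t) (at t)"
  unfolding acc_def by (intro smooth_traj_has_vector_derivative smooth_traj_vel)

lemma vector_derivative_comp_real:
  assumes "(f has_real_derivative f') (at s)" and "(H has_vector_derivative H') (at (f s))"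
  shows "vector_derivative (\<lambda>s. H (f s)) (at s) = f' *\<^sub>R H'"
  using vector_diff_chain_at[OF assms(1)[unfolded has_real_derivative_iff_has_vector_derivative] assms(2)]
  by (simp add: o_def vector_derivative_at)

lemma gam_radicand_pos:
  fixes v :: "'a::real_inner"
  assumes "norm v < c" shows "0 < 1 - v \<bullet> v / c\<^sup>2"
proof -
  have "0 < c" using assms norm_ge_zero[of v] by linarith
  moreover have "v \<bullet> v < c\<^sup>2"
    using assms by (metis norm_ge_zero power2_norm_eq_inner power_strict_mono zero_less_numeral)
  ultimately show ?thesis by (simp add: field_simps)
qed

lemma gam_pos: "norm v < c \<Longrightarrow> 0 < gam c v"
  using gam_radicand_pos[of v c] by (simp add: gam_def)

lemma gam_squared_mult:
  assumes "norm v < c" shows "(gam c v)\<^sup>2 * (1 - v \<bullet> v / c\<^sup>2) = 1"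
proof -
  have "(1 / sqrt u)\<^sup>2 * u = 1" if "0 < u" for u :: real
    using that by (simp add: power_divide)
  then show ?thesis
    unfolding gam_def using gam_radicand_pos[OF assms] by blast
qed

lemma has_real_derivative_gam:
  assumes v: "(v has_vector_derivative a) (at t)" and "norm (v t) < c"
  shows "((\<lambda>s. gam c (v s)) has_real_derivative gam c (v t) ^ 3 * (v t \<bullet> a) / c\<^sup>2) (at t)"
proof -
  define u where "u s = 1 - v s \<bullet> v s / c\<^sup>2" for s
  have "0 < u t"
    unfolding u_def using \<open>norm (v t) < c\<close> by (rule gam_radicand_pos)
  have "(u has_real_derivative - 2 * (v t \<bullet> a) / c\<^sup>2) (at t)"
    using bounded_bilinear.has_vector_derivative[OF bounded_bilinear_inner v v]
    unfolding u_def has_real_derivative_iff_has_vector_derivative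
    by (auto intro!: derivative_eq_intros simp: inner_commute)
  then have "((\<lambda>s. 1 / sqrt (u s)) has_real_derivative gam c (v t) ^ 3 * (v t \<bullet> a) / c\<^sup>2) (at t)"
    using \<open>0 < u t\<close>
    by (auto intro!: derivative_eq_intros simp: gam_def u_def[symmetric] field_simps power3_eq_cube
        real_sqrt_mult[symmetric])
  then show ?thesis by (simp add: gam_def u_def)
qed

section \<open>The projection orthogonal to a timelike vector\<close>

lemma mink_add_right: "mink U (w + w') = mink U w + mink U w'"
  by (simp add: mink_def algebra_simps)

lemma mink_scaleR_right: "mink U (r *\<^sub>R w) = r * mink U w"
  by (simp add: mink_def algebra_simps)

lemma proj_add: "proj c U (w + w') = proj c U w + proj c U w'"
  by (simp add: proj_def mink_add_right add_divide_distrib scaleR_add_left)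

lemma proj_scaleR: "proj c U (r *\<^sub>R w) = r *\<^sub>R proj c U w"
  by (simp add: proj_def mink_scaleR_right scaleR_add_right)

lemma mink_proj_eq_0:
  assumes "mink U U = - c\<^sup>2" and "c \<noteq> 0" shows "mink U (proj c U w) = 0"
  using assms by (simp add: proj_def mink_add_right mink_scaleR_right)

lemma proj_self_eq_0:
  assumes "mink U U = - c\<^sup>2" and "c \<noteq> 0" shows "proj c U U = 0"
  using assms by (simp add: proj_def)

lemma proj_derivative_of_proj:
  assumes "mink U U = - c\<^sup>2" and "c \<noteq> 0" and "mink U U' = 0"
  shows "proj c U (W' + \<alpha> *\<^sub>R U + \<beta> *\<^sub>R U') = proj c U W' + \<beta> *\<^sub>R U'"
  using assms by (simp add: proj_add proj_scaleR proj_self_eq_0) (simp add: proj_def)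
lemma has_real_derivative_mink:
  assumes "(U has_vector_derivative U') (at t)" and "(W has_vector_derivative W') (at t)"
  shows "((\<lambda>s. mink (U s) (W s)) has_real_derivative mink U' (W t) + mink (U t) W') (at t)"
proof -
  have fst_deriv: "((\<lambda>s. fst (X s)) has_vector_derivative fst X') (at t)"
    and snd_deriv: "((\<lambda>s. snd (X s)) has_vector_derivative snd X') (at t)"
    if "(X has_vector_derivative X') (at t)" for X :: "real \<Rightarrow> real \<times> (real^'d)" and X'
    using bounded_linear.has_vector_derivative[OF bounded_linear_fst that]
      bounded_linear.has_vector_derivative[OF bounded_linear_snd that] by auto
  show ?thesis
    using has_vector_derivative_add[OF
        has_vector_derivative_minus[OF has_vector_derivative_mult[OF fst_deriv[OF assms(1)] fst_deriv[OF assms(2)]]]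
        bounded_bilinear.has_vector_derivative[OF bounded_bilinear_inner snd_deriv[OF assms(1)] snd_deriv[OF assms(2)]]]
    unfolding mink_def has_real_derivative_iff_has_vector_derivative by (simp add: algebra_simps)
qed

lemma has_vector_derivative_proj:
  assumes "(U has_vector_derivative U') (at t)" and "(W has_vector_derivative W') (at t)"
  shows "((\<lambda>s. proj c (U s) (W s)) has_vector_derivative
           W' + ((mink U' (W t) + mink (U t) W') / c\<^sup>2) *\<^sub>R U t + (mink (U t) (W t) / c\<^sup>2) *\<^sub>R U')
         (at t)"
proof -
  have "((\<lambda>s. mink (U s) (W s) / c\<^sup>2) has_real_derivative (mink U' (W t) + mink (U t) W') / c\<^sup>2) (at t)"
    by (intro DERIV_cdivide has_real_derivative_mink assms)
  from has_vector_derivative_add[OF assms(2) has_vector_derivative_scaleR[OF this assms(1)]]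
  show ?thesis unfolding proj_def by (simp add: add_ac)
qed

definition fourvel :: "real \<Rightarrow> real^'d \<Rightarrow> real \<times> (real^'d)" where
  "fourvel c v = (c * gam c v, gam c v *\<^sub>R v)"

lemma mink_fourvel_self:
  assumes "norm v < c" shows "mink (fourvel c v) (fourvel c v) = - c\<^sup>2"
proof -
  have "c \<noteq> 0" using assms norm_ge_zero[of v] by linarith
  then show ?thesis
    using gam_squared_mult[OF assms] by (simp add: mink_def fourvel_def field_simps power2_eq_square)
qed

lemma has_vector_derivative_fourvel:
  assumes v: "(v has_vector_derivative a) (at t)" and "norm (v t) < c"
  shows "((\<lambda>s. fourvel c (v s)) has_vector_derivative gam c (v t) *\<^sub>R proj c (fourvel c (v t)) (0, a))
         (at t)"
proof -
  let ?g = "gam c (v t)" and ?g' = "gam c (v t) ^ 3 * (v t \<bullet> a) / c\<^sup>2"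
  have g: "((\<lambda>s. gam c (v s)) has_real_derivative ?g') (at t)"
    using has_real_derivative_gam[OF assms] .
  have "((\<lambda>s. fourvel c (v s)) has_vector_derivative (c * ?g', ?g *\<^sub>R a + ?g' *\<^sub>R v t)) (at t)"
    unfolding fourvel_def
    by (intro has_vector_derivative_Pair has_vector_derivative_scaleR g v
        DERIV_cmult[OF g, unfolded has_real_derivative_iff_has_vector_derivative])
  moreover have "(c * ?g', ?g *\<^sub>R a + ?g' *\<^sub>R v t) = ?g *\<^sub>R proj c (fourvel c (v t)) (0, a)"
    by (simp add: proj_def mink_def fourvel_def power2_eq_square power3_eq_cube field_simps)
  ultimately show ?thesis by simp
qed

lemma Mhat_mult_vector: "Mhat c v *v y = y + ((gam c v)\<^sup>2 / c\<^sup>2 * (v \<bullet> y)) *\<^sub>R v"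
proof -
  let ?k = "(gam c v)\<^sup>2 / c\<^sup>2"
  have "(Mhat c v *v y) $ i = (\<Sum>j\<in>UNIV. (if i = j then y $ j else 0) + ?k * v $ i * (v $ j * y $ j))"
    for i by (auto simp: Mhat_def matrix_vector_mult_def algebra_simps intro!: sum.cong)
  also have "\<dots> i = y $ i + ?k * v $ i * (v \<bullet> y)" for i
    by (simp only: sum.distrib sum_distrib_left[symmetric] inner_vec_def) simp
  finally show ?thesis by (simp add: vec_eq_iff)
qed

lemma proj_fourvel_zero_Pair: "proj c (fourvel c v) (0, y) = ((gam c v)\<^sup>2 * (v \<bullet> y) / c, Mhat c v *v y)"
  by (simp add: proj_def mink_def fourvel_def Mhat_mult_vector power2_eq_square field_simps)

lemma proj_fourvel_derivative_lift:
  assumes v: "(v has_vector_derivative a) (at t)" and subluminal: "norm (v t) < c"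
    and Y: "(Y has_vector_derivative Y') (at t)"
  obtains F' where "((\<lambda>s. proj c (fourvel c (v s)) (0, Y s)) has_vector_derivative F') (at t)"
    and "proj c (fourvel c (v t)) F'
           = proj c (fourvel c (v t)) (0, Y' + ((gam c (v t))\<^sup>2 / c\<^sup>2 * (v t \<bullet> Y t)) *\<^sub>R a)"
proof -
  let ?g = "gam c (v t)" and ?U = "fourvel c (v t)"
  let ?U' = "?g *\<^sub>R proj c ?U (0, a)" and ?\<beta> = "mink ?U (0, Y t) / c\<^sup>2"
  have "c \<noteq> 0" using subluminal norm_ge_zero[of "v t"] by linarith
  have UU: "mink ?U ?U = - c\<^sup>2" using mink_fourvel_self[OF subluminal] .
  have UU': "mink ?U ?U' = 0" by (simp add: mink_scaleR_right mink_proj_eq_0[OF UU \<open>c \<noteq> 0\<close>])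
  have "((\<lambda>s. (0, Y s)) has_vector_derivative (0, Y')) (at t)"
    by (intro has_vector_derivative_Pair Y has_vector_derivative_const)
  from has_vector_derivative_proj[OF has_vector_derivative_fourvel[OF v subluminal] this]
  obtain \<alpha> where F: "((\<lambda>s. proj c (fourvel c (v s)) (0, Y s)) has_vector_derivative
                       (0, Y') + \<alpha> *\<^sub>R ?U + ?\<beta> *\<^sub>R ?U') (at t)" by blast
  have "proj c ?U ((0, Y') + \<alpha> *\<^sub>R ?U + ?\<beta> *\<^sub>R ?U') = proj c ?U (0, Y') + ?\<beta> *\<^sub>R ?U'"
    by (rule proj_derivative_of_proj[OF UU \<open>c \<noteq> 0\<close> UU'])
  also have "\<dots> = proj c ?U (0, Y' + (?g\<^sup>2 / c\<^sup>2 * (v t \<bullet> Y t)) *\<^sub>R a)"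
    by (simp add: proj_add[symmetric] proj_scaleR[symmetric] mink_def fourvel_def power2_eq_square
        mult_ac)
  finally show thesis using F that by blast
qed

section \<open>The recursion along the worldline\<close>

definition scaled_Q :: "real \<Rightarrow> (real \<Rightarrow> real^'d) \<Rightarrow> nat \<Rightarrow> real \<Rightarrow> real^'d" where
  "scaled_Q c x n t = gam c (vel x t) ^ Suc n *\<^sub>R Q c x n t"

lemma scaled_Q_Suc_Suc:
  assumes "gam c (vel x t) \<noteq> 0"
  shows "scaled_Q c x (Suc (Suc k)) t
           = gam c (vel x t) *\<^sub>R vector_derivative (scaled_Q c x (Suc k)) (at t)
             + (gam c (vel x t) ^ 3 / c\<^sup>2 * (vel x t \<bullet> scaled_Q c x (Suc k) t)) *\<^sub>R acc x t"
  using assms unfolding scaled_Q_def[abs_def]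
  by (simp add: scaleR_add_right field_simps power2_eq_square power3_eq_cube)

lemma proj_fourvel_scaled_Q:
  "proj c (fourvel c (vel x t)) (0, scaled_Q c x n t)
     = (gam c (vel x t) ^ (n + 3) / c * (vel x t \<bullet> Q c x n t),
        gam c (vel x t) ^ (n + 1) *\<^sub>R (Mhat c (vel x t) *v Q c x n t))"
  by (simp add: proj_fourvel_zero_Pair scaled_Q_def matrix_vector_mult_scaleR power_add
      power2_eq_square power3_eq_cube mult_ac)

context
  fixes c :: real and x :: "real \<Rightarrow> real^'d"
  assumes smooth: "smooth_traj x" and subluminal: "\<forall>t. norm (vel x t) < c"
begin

lemma times_differentiable_vel: "times_differentiable k (vel x)"
  by (intro smooth_traj_times_differentiable smooth_traj_vel smooth)

lemma times_differentiable_acc: "times_differentiable k (acc x)"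
  by (intro smooth_traj_times_differentiable smooth_traj_acc smooth)

lemma gam_vel_neq_0: "gam c (vel x t) \<noteq> 0"
  using gam_pos[of "vel x t" c] subluminal by simp

lemma times_differentiable_gam_vel: "times_differentiable k (\<lambda>t. gam c (vel x t))"
proof (induction k)
  case (Suc k)
  have "times_differentiable k (\<lambda>t. gam c (vel x t) ^ 3 * (vel x t \<bullet> acc x t) / c\<^sup>2)"
    by (intro times_differentiable_divide_const times_differentiable_mult times_differentiable_power
        times_differentiable_inner Suc times_differentiable_vel times_differentiable_acc)
  then show ?case
    using subluminal
    by (intro times_differentiable_SucI[OF has_real_derivative_gam[OF has_vector_derivative_acc[OF smooth],
            unfolded has_real_derivative_iff_has_vector_derivative]]) auto
qed simp

lemma times_differentiable_scaled_Q: "times_differentiable k (scaled_Q c x (Suc m))"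
proof (induction m arbitrary: k)
  case 0
  show ?case
    unfolding scaled_Q_def[abs_def] Q.simps
    by (intro times_differentiable_scaleR times_differentiable_power times_differentiable_gam_vel
        times_differentiable_acc)
next
  case (Suc m)
  have "times_differentiable k (\<lambda>t. vector_derivative (scaled_Q c x (Suc m)) (at t))"
    using Suc.IH[of "Suc k"] by simp
  then have "times_differentiable k (\<lambda>t. gam c (vel x t) *\<^sub>R vector_derivative (scaled_Q c x (Suc m)) (at t)
             + (gam c (vel x t) ^ 3 / c\<^sup>2 * (vel x t \<bullet> scaled_Q c x (Suc m) t)) *\<^sub>R acc x t)"
    by (intro times_differentiable_add times_differentiable_scaleR times_differentiable_mult
        times_differentiable_divide_const times_differentiable_power times_differentiable_gam_vel
        times_differentiable_inner times_differentiable_vel times_differentiable_acc Suc.IH)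
  then show ?case by (simp add: scaled_Q_Suc_Suc[OF gam_vel_neq_0])
qed

context
  fixes tt :: "real \<Rightarrow> real"
  assumes proper_time: "\<forall>s. (tt has_real_derivative gam c (vel x (tt s))) (at s)"
begin

lemma fvel_eq_fourvel: "fvel c tt x s = fourvel c (vel x (tt s))"
proof -
  have "((\<lambda>t. (c * t, x t)) has_vector_derivative (c, vel x (tt s))) (at (tt s))"
    by (intro has_vector_derivative_Pair has_vector_derivative_vel smooth)
      (auto intro!: derivative_eq_intros)
  from vector_derivative_comp_real[OF proper_time[rule_format] this]
  show ?thesis unfolding fvel_def worldline_def[abs_def] by (simp add: fourvel_def mult.commute)
qed

lemma P_Suc_eq_proj_scaled_Q:
  "P c tt x (Suc m) s = proj c (fourvel c (vel x (tt s))) (0, scaled_Q c x (Suc m) (tt s))"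
proof (induction m arbitrary: s)
  case 0
  let ?g = "gam c (vel x (tt s))" and ?U = "fourvel c (vel x (tt s))"
  have "P c tt x (Suc 0) s = vector_derivative (\<lambda>s. fourvel c (vel x (tt s))) (at s)"
    by (simp add: facc_def fvel_eq_fourvel[abs_def])
  also have "\<dots> = ?g *\<^sub>R ?g *\<^sub>R proj c ?U (0, acc x (tt s))"
    using subluminal
    by (intro vector_derivative_comp_real proper_time[rule_format] has_vector_derivative_fourvel
        has_vector_derivative_acc smooth) auto
  also have "\<dots> = proj c ?U (0, scaled_Q c x (Suc 0) (tt s))"
    by (simp add: scaled_Q_def proj_scaleR[symmetric] power2_eq_square)
  finally show ?case .
next
  case (Suc m)
  let ?t = "tt s" let ?g = "gam c (vel x ?t)" and ?U = "fourvel c (vel x ?t)"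
  let ?Y = "scaled_Q c x (Suc m)" let ?Y' = "vector_derivative ?Y (at ?t)"
  obtain F' where F': "((\<lambda>t. proj c (fourvel c (vel x t)) (0, ?Y t)) has_vector_derivative F') (at ?t)"
    and proj_F': "proj c ?U F' = proj c ?U (0, ?Y' + (?g\<^sup>2 / c\<^sup>2 * (vel x ?t \<bullet> ?Y ?t)) *\<^sub>R acc x ?t)"
    using proj_fourvel_derivative_lift[OF has_vector_derivative_acc[OF smooth]
        subluminal[rule_format] times_differentiable_SucD[OF times_differentiable_scaled_Q]]
    by blast
  have "P c tt x (Suc m) = (\<lambda>s. proj c (fourvel c (vel x (tt s))) (0, ?Y (tt s)))"
    using Suc.IH by (simp add: fun_eq_iff)
  then have "P c tt x (Suc (Suc m)) s = proj c ?U (?g *\<^sub>R F')"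
    by (simp add: fvel_eq_fourvel vector_derivative_comp_real[OF proper_time[rule_format] F'])
  also have "\<dots> = proj c ?U (?g *\<^sub>R (0, ?Y' + (?g\<^sup>2 / c\<^sup>2 * (vel x ?t \<bullet> ?Y ?t)) *\<^sub>R acc x ?t))"
    by (simp only: proj_scaleR proj_F')
  also have "\<dots> = proj c ?U (0, scaled_Q c x (Suc (Suc m)) ?t)"
    by (simp add: scaled_Q_Suc_Suc[OF gam_vel_neq_0] scaleR_add_right power2_eq_square
        power3_eq_cube mult_ac)
  finally show ?case .
qed

end

end

theorem proposition1:
  fixes c :: real and x :: "real \<Rightarrow> real^'d" and tt :: "real \<Rightarrow> real"
  assumes "c > 0"
    and "smooth_traj x"
    and "\<forall>t. norm (vel x t) < c"
    and "\<forall>s. (tt has_real_derivative gam c (vel x (tt s))) (at s)"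
  shows "\<forall>n\<ge>1. \<forall>s. P c tt x n s =
           (gam c (vel x (tt s)) ^ (n + 3) / c * (vel x (tt s) \<bullet> Q c x n (tt s)),
            gam c (vel x (tt s)) ^ (n + 1) *\<^sub>R (Mhat c (vel x (tt s)) *v Q c x n (tt s)))"
proof -
  \<comment> \<open>\<open>c > 0\<close> is implied by the subluminal hypothesis and not needed.\<close>
  have "P c tt x (Suc m) s = proj c (fourvel c (vel x (tt s))) (0, scaled_Q c x (Suc m) (tt s))" for m s
    by (rule P_Suc_eq_proj_scaled_Q[OF assms(2-4)])
  then show ?thesis
    by (metis One_nat_def Suc_le_D proj_fourvel_scaled_Q)
qed

end
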